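(* Let $G$ be a finite group and $f \ge 0$. Call an irreducible representation $\lambda$ of $G$ $f$-smooth if $\sum_{g \in G} \left|\chi_\lambda(g)/d_\lambda\right|^4 \le f$. Let $\lambda,\mu,\lambda',\mu'$ be irreducible representations of $G$, and suppose $\lambda$ and $\mu$ are $f$-smooth. Then \[ P_{\rm coll}^{\lambda\otimes\mu,\lambda'\otimes\mu'} \le \frac{\max_\tau d_\tau}{\sqrt{|G|}}\sqrt{f}, \] where the maximum is over irreducible representations $\tau$ of $G$.
   Context: For irreps $\lambda,\mu,\tau$ of a finite group $G$, with characters $\chi$ and dimensions $d$, the natural distribution on irreps in $\lambda\otimes\mu$ is $P^{\lambda\otimes\mu}_\tau = \frac{d_\tau}{d_\lambda d_\mu}\langle \chi_\tau, \chi_\lambda\chi_\mu\rangle_G$, where $\langle \phi,\psi\rangle_G = \frac{1}{|G|}\sum_{g\in G}\phi(g)\psi(g)^*$. The collision probability is $P_{\rm coll}^{\lambda\otimes\mu,\lambda'\otimes\mu'} = \sum_\tau P^{\lambda\otimes\mu}_\tau P^{\lambda'\otimes\mu'}_\tau$, summing over all irreps $\tau$ of $G$. *)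

theory Defs
  imports "HOL-Algebra.Group" "Jordan_Normal_Form.Matrix"
begin

definition rep :: "('a, 'b) monoid_scheme \<Rightarrow> nat \<Rightarrow> ('a \<Rightarrow> complex mat) \<Rightarrow> bool" where
  "rep G d \<rho> \<longleftrightarrow>
     (\<forall>g \<in> carrier G. \<rho> g \<in> carrier_mat d d) \<and>
     \<rho> \<one>\<^bsub>G\<^esub> = 1\<^sub>m d \<and>
     (\<forall>g \<in> carrier G. \<forall>h \<in> carrier G. \<rho> (g \<otimes>\<^bsub>G\<^esub> h) = \<rho> g * \<rho> h)"

definition subspace_vec :: "nat \<Rightarrow> complex vec set \<Rightarrow> bool" where
  "subspace_vec d W \<longleftrightarrow> W \<subseteq> carrier_vec d \<and> 0\<^sub>v d \<in> W \<and>
     (\<forall>v \<in> W. \<forall>w \<in> W. v + w \<in> W) \<and> (\<forall>c. \<forall>v \<in> W. c \<cdot>\<^sub>v v \<in> W)"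

definition irrep :: "('a, 'b) monoid_scheme \<Rightarrow> nat \<Rightarrow> ('a \<Rightarrow> complex mat) \<Rightarrow> bool" where
  "irrep G d \<rho> \<longleftrightarrow> rep G d \<rho> \<and> d > 0 \<and>
     (\<forall>W. subspace_vec d W \<and> (\<forall>g \<in> carrier G. \<forall>v \<in> W. \<rho> g *\<^sub>v v \<in> W)
          \<longrightarrow> W = {0\<^sub>v d} \<or> W = carrier_vec d)"

definition mat_trace :: "complex mat \<Rightarrow> complex" where
  "mat_trace A = (\<Sum>i<dim_row A. A $$ (i, i))"

definition character :: "('a, 'b) monoid_scheme \<Rightarrow> ('a \<Rightarrow> complex mat) \<Rightarrow> 'a \<Rightarrow> complex" where
  "character G \<rho> = (\<lambda>g. if g \<in> carrier G then mat_trace (\<rho> g) else 0)"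

text \<open>The set of irreducible characters; summing over it = summing over irreps up to isomorphism.\<close>
definition irr_chars :: "('a, 'b) monoid_scheme \<Rightarrow> ('a \<Rightarrow> complex) set" where
  "irr_chars G = {character G \<rho> | d \<rho>. irrep G d \<rho>}"

definition char_dim :: "('a, 'b) monoid_scheme \<Rightarrow> ('a \<Rightarrow> complex) \<Rightarrow> real" where
  "char_dim G \<chi> = Re (\<chi> \<one>\<^bsub>G\<^esub>)"

definition class_inner :: "('a, 'b) monoid_scheme \<Rightarrow> ('a \<Rightarrow> complex) \<Rightarrow> ('a \<Rightarrow> complex) \<Rightarrow> complex" where
  "class_inner G \<phi> \<psi> = (\<Sum>g \<in> carrier G. \<phi> g * cnj (\<psi> g)) / of_nat (card (carrier G))"

text \<open>P^{lambda tensor mu}_tau, in terms of characters (the value is real; we take Re of the inner product).\<close>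
definition P_tensor :: "('a, 'b) monoid_scheme \<Rightarrow> ('a \<Rightarrow> complex) \<Rightarrow> ('a \<Rightarrow> complex) \<Rightarrow> ('a \<Rightarrow> complex) \<Rightarrow> real" where
  "P_tensor G \<chi>l \<chi>m \<chi>t =
     char_dim G \<chi>t / (char_dim G \<chi>l * char_dim G \<chi>m) *
     Re (class_inner G \<chi>t (\<lambda>g. \<chi>l g * \<chi>m g))"

definition P_coll :: "('a, 'b) monoid_scheme \<Rightarrow> ('a \<Rightarrow> complex) \<Rightarrow> ('a \<Rightarrow> complex) \<Rightarrow>
    ('a \<Rightarrow> complex) \<Rightarrow> ('a \<Rightarrow> complex) \<Rightarrow> real" where
  "P_coll G \<chi>l \<chi>m \<chi>l' \<chi>m' =
     (\<Sum>\<chi>t \<in> irr_chars G. P_tensor G \<chi>l \<chi>m \<chi>t * P_tensor G \<chi>l' \<chi>m' \<chi>t)"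

definition smooth :: "('a, 'b) monoid_scheme \<Rightarrow> real \<Rightarrow> nat \<Rightarrow> ('a \<Rightarrow> complex mat) \<Rightarrow> bool" where
  "smooth G f d \<rho> \<longleftrightarrow> (\<Sum>g \<in> carrier G. (cmod (character G \<rho> g / of_nat d)) ^ 4) \<le> f"

definition max_irrep_dim :: "('a, 'b) monoid_scheme \<Rightarrow> real" where
  "max_irrep_dim G = Max {real d | d. \<exists>\<rho>. irrep G d \<rho>}"

end

theory Submission
  imports Defs "Jordan_Normal_Form.Schur_Decomposition" "HOL-Algebra.Multiplicative_Group"
    "HOL-Analysis.L2_Norm"
begin

(* Write P_tau and P'_tau for the distributions of tau in lambda (x) mu and in lambda' (x) mu'.
   Realise lambda' (x) mu' as a Kronecker-product representation sigma of degree m.  Then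
   d_tau <chi_sigma, chi_tau> is the trace of E_tau = (d_tau / |G|) sum_g chi_tau(g^-1) sigma(g).
   By Schur orthogonality the E_tau are orthogonal idempotents, and the trace of an idempotent
   m x m matrix is a natural number at most m (triangularise it); so the P'_tau are nonnegative
   and sum to at most 1, whence P_coll <= max_tau |P_tau|.
   Finally |P_tau| <= d_tau |<chi_tau, (chi_lambda / d_lambda) (chi_mu / d_mu)>|, and
   Cauchy-Schwarz, applied once with sum_g |chi_tau(g)|^2 = |G| and once more to the fourth
   powers bounded by smoothness, gives |P_tau| <= d_tau sqrt f / sqrt |G|. *)

section \<open>Traces, kernels and triangular forms\<close>

lemma index_mult_mat_sum:
  "A \<in> carrier_mat a b \<Longrightarrow> B \<in> carrier_mat b c \<Longrightarrow> i < a \<Longrightarrow> l < c \<Longrightarrow>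
    (A * B) $$ (i,l) = (\<Sum>p<b. A $$ (i,p) * B $$ (p,l))"
  by (auto simp: scalar_prod_def intro!: sum.cong)

lemma mult_smult_one_mat:
  "(A :: 'a :: comm_ring_1 mat) \<in> carrier_mat m n \<Longrightarrow> A * (a \<cdot>\<^sub>m 1\<^sub>m n) = a \<cdot>\<^sub>m A"
  by (simp add: mult_smult_distrib[of A m n "1\<^sub>m n" n])

lemma smult_one_mat_mult:
  "(A :: 'a :: comm_ring_1 mat) \<in> carrier_mat n m \<Longrightarrow> (a \<cdot>\<^sub>m 1\<^sub>m n) * A = a \<cdot>\<^sub>m A"
  by (simp add: mult_smult_assoc_mat[of "1\<^sub>m n" n n A m])

lemma nonzero_matE:
  assumes "A \<in> carrier_mat nr nc" and "A \<noteq> 0\<^sub>m nr nc"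
  obtains i j where "i < nr" and "j < nc" and "A $$ (i,j) \<noteq> 0"
proof -
  have "\<not> (\<forall>i<nr. \<forall>j<nc. A $$ (i,j) = 0)"
  proof
    assume "\<forall>i<nr. \<forall>j<nc. A $$ (i,j) = 0"
    then have "A = 0\<^sub>m nr nc"
      using assms(1) by (intro eq_matI) auto
    with assms(2) show False
      by simp
  qed
  then show ?thesis
    using that by blast
qed

lemma zero_mat_if_mult_vec_zero:
  fixes T :: "'a :: semiring_1 mat"
  assumes T: "T \<in> carrier_mat nr nc" and zero: "\<And>v. v \<in> carrier_vec nc \<Longrightarrow> T *\<^sub>v v = 0\<^sub>v nr"
  shows "T = 0\<^sub>m nr nc"
proof (rule eq_matI)
  fix i j assume i: "i < dim_row (0\<^sub>m nr nc)" and j: "j < dim_col (0\<^sub>m nr nc)"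
  have "(T *\<^sub>v unit_vec nc j) $ i = 0"
    using zero[of "unit_vec nc j"] i j by simp
  then show "T $$ (i,j) = 0\<^sub>m nr nc $$ (i,j)"
    using i j T by auto
qed (use T in auto)

lemma subspace_vec_kernel:
  assumes T: "T \<in> carrier_mat nr nc"
  shows "subspace_vec nc {v \<in> carrier_vec nc. T *\<^sub>v v = 0\<^sub>v nr}" (is "subspace_vec nc ?W")
  unfolding subspace_vec_def
proof (intro conjI ballI allI)
  show "0\<^sub>v nc \<in> ?W"
    using T by (auto intro!: eq_vecI)
next
  fix v w assume "v \<in> ?W" "w \<in> ?W"
  then show "v + w \<in> ?W"
    using T by (auto simp: mult_add_distrib_mat_vec[OF T])
next
  fix a v assume "v \<in> ?W"
  then show "a \<cdot>\<^sub>v v \<in> ?W"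
    using T by (auto simp: mult_mat_vec[OF T])
qed auto

lemma intertwines_mult:
  fixes A B C S T :: "'a :: semiring_0 mat"
  assumes A: "A \<in> carrier_mat na na" and B: "B \<in> carrier_mat nb nb"
    and C: "C \<in> carrier_mat nc nc" and S: "S \<in> carrier_mat na nb" and T: "T \<in> carrier_mat nb nc"
    and AS: "A * S = S * B" and BT: "B * T = T * C"
  shows "A * (S * T) = (S * T) * C"
proof -
  have "A * (S * T) = S * B * T"
    using assoc_mult_mat[OF A S T] AS by simp
  also have "\<dots> = S * (T * C)"
    using assoc_mult_mat[OF S B T] BT by simp
  also have "\<dots> = (S * T) * C"
    using assoc_mult_mat[OF S T C] by simp
  finally show ?thesis .
qed

lemma mat_trace_eq_sum: "A \<in> carrier_mat n n \<Longrightarrow> mat_trace A = (\<Sum>i<n. A $$ (i,i))"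
  unfolding mat_trace_def by simp

lemma mat_trace_smult: "A \<in> carrier_mat n n \<Longrightarrow> mat_trace (a \<cdot>\<^sub>m A) = a * mat_trace A"
  by (simp add: mat_trace_eq_sum[of _ n] sum_distrib_left)

lemma mat_trace_mult_comm:
  assumes "A \<in> carrier_mat n m" and "B \<in> carrier_mat m n"
  shows "mat_trace (A * B) = mat_trace (B * A)"
proof -
  have "mat_trace (A * B) = (\<Sum>i<n. \<Sum>k<m. A $$ (i,k) * B $$ (k,i))"
    using assms by (auto simp: mat_trace_def scalar_prod_def intro!: sum.cong)
  also have "\<dots> = (\<Sum>k<m. \<Sum>i<n. B $$ (k,i) * A $$ (i,k))"
    by (subst sum.swap) (simp add: mult.commute)
  also have "\<dots> = mat_trace (B * A)"
    using assms by (auto simp: mat_trace_def scalar_prod_def intro!: sum.cong)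
  finally show ?thesis .
qed

lemma mat_trace_similar:
  assumes "similar_mat_wit A B P Q"
  shows "mat_trace A = mat_trace B"
proof -
  define n where "n = dim_row A"
  note wit = similar_mat_witD[OF n_def assms]
  have "mat_trace A = mat_trace (P * (B * Q))"
    using wit by (simp add: assoc_mult_mat[of _ n n _ n _ n])
  also have "\<dots> = mat_trace (B * Q * P)"
    using wit by (intro mat_trace_mult_comm[of _ n n]) auto
  also have "B * Q * P = B"
    using wit by (simp add: assoc_mult_mat[of _ n n _ n _ n])
  finally show ?thesis .
qed

lemma mat_trace_eq_if_intertwined:
  fixes A B T S :: "complex mat"
  assumes A: "A \<in> carrier_mat b b" and B: "B \<in> carrier_mat c c"
    and T: "T \<in> carrier_mat b c" and S: "S \<in> carrier_mat c b" and AT: "A * T = T * B"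
    and TS: "T * S = \<alpha> \<cdot>\<^sub>m 1\<^sub>m b" and ST: "S * T = \<alpha> \<cdot>\<^sub>m 1\<^sub>m c" and \<alpha>: "\<alpha> \<noteq> 0"
  shows "mat_trace A = mat_trace B"
proof -
  have "\<alpha> * mat_trace A = mat_trace (A * T * S)"
    using TS A by (simp add: assoc_mult_mat[OF A T S] mult_smult_one_mat mat_trace_smult[of _ b])
  also have "A * T * S = T * (B * S)"
    using AT by (simp add: assoc_mult_mat[OF T B S])
  also have "mat_trace \<dots> = mat_trace (B * S * T)"
    using T S B by (intro mat_trace_mult_comm[of _ b c]) auto
  also have "\<dots> = \<alpha> * mat_trace B"
    using ST B by (simp add: assoc_mult_mat[OF B S T] mult_smult_one_mat mat_trace_smult[of _ c])
  finally show ?thesis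
    using \<alpha> by simp
qed

lemma upper_triangular_mult:
  fixes B C :: "'a :: semiring_0 mat"
  assumes B: "B \<in> carrier_mat n n" and C: "C \<in> carrier_mat n n"
    and "upper_triangular B" and "upper_triangular C"
  shows "upper_triangular (B * C)"
proof
  fix i j assume i: "i < dim_row (B * C)" and j: "j < i"
  have "B $$ (i,k) * C $$ (k,j) = 0" if "k < n" for k
    using assms i j that by (cases "k < i") (auto simp: upper_triangular_def)
  then show "(B * C) $$ (i,j) = 0"
    using B C i j by (subst index_mult_mat_sum[OF B C]) auto
qed

lemma diag_mult_upper_triangular:
  fixes B C :: "'a :: semiring_0 mat"
  assumes B: "B \<in> carrier_mat n n" and C: "C \<in> carrier_mat n n"
    and "upper_triangular B" and "upper_triangular C" and i: "i < n"
  shows "(B * C) $$ (i,i) = B $$ (i,i) * C $$ (i,i)"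
proof -
  have "B $$ (i,k) * C $$ (k,i) = 0" if "k < n" "k \<noteq> i" for k
    using assms that by (cases "k < i") (auto simp: upper_triangular_def)
  then have "(\<Sum>k<n. B $$ (i,k) * C $$ (k,i)) = B $$ (i,i) * C $$ (i,i)"
    using i by (subst sum.remove[of _ i]) (auto intro!: sum.neutral)
  then show ?thesis
    using B C i by (subst index_mult_mat_sum[OF B C]) auto
qed

lemma upper_triangular_pow:
  fixes B :: "'a :: semiring_1 mat"
  assumes B: "B \<in> carrier_mat n n" and ut: "upper_triangular B"
  shows "upper_triangular (B ^\<^sub>m k)"
proof (induction k)
  case (Suc k)
  then show ?case
    using upper_triangular_mult[OF pow_carrier_mat[OF B] B _ ut] by simp
qed simp

lemma diag_pow_upper_triangular:
  fixes B :: "'a :: comm_semiring_1 mat"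
  assumes B: "B \<in> carrier_mat n n" and ut: "upper_triangular B" and i: "i < n"
  shows "(B ^\<^sub>m k) $$ (i,i) = B $$ (i,i) ^ k"
proof (induction k)
  case (Suc k)
  have "(B ^\<^sub>m k * B) $$ (i,i) = (B ^\<^sub>m k) $$ (i,i) * B $$ (i,i)"
    using diag_mult_upper_triangular[OF pow_carrier_mat[OF B] B upper_triangular_pow[OF B ut] ut i] .
  then show ?case
    using Suc by (simp add: mult.commute)
qed (use B i in simp)

lemma similar_upper_triangular_exists:
  fixes A :: "complex mat"
  assumes A: "A \<in> carrier_mat n n"
  obtains B P Q where "similar_mat_wit A B P Q" and "upper_triangular B"
proof -
  obtain es where "char_poly A = (\<Prod>a\<leftarrow>es. [:- a, 1:])"
    using char_poly_factorized[OF A] by auto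
  moreover obtain B P Q where "schur_decomposition A es = (B, P, Q)"
    by (cases "schur_decomposition A es") auto
  ultimately show ?thesis
    using schur_decomposition[OF A] that by blast
qed

lemma diag_upper_triangular_pow_eq:
  fixes A B :: "'a :: comm_ring_1 mat"
  assumes A: "A \<in> carrier_mat n n" and wit: "similar_mat_wit A B P Q"
    and ut: "upper_triangular B" and eq: "A ^\<^sub>m j = A ^\<^sub>m k" and i: "i < n"
  shows "B $$ (i,i) ^ j = B $$ (i,i) ^ k"
proof -
  have B: "B \<in> carrier_mat n n"
    using similar_mat_witD2[OF A wit] by simp
  have "B ^\<^sub>m l = Q * A ^\<^sub>m l * P" for l
    using similar_mat_witD(3)[OF refl similar_mat_wit_sym[OF similar_mat_wit_pow[OF wit]]] .
  then have "B ^\<^sub>m j = B ^\<^sub>m k"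
    using eq by simp
  then show ?thesis
    using diag_pow_upper_triangular[OF B ut i] by metis
qed

lemma mat_trace_pow_upper_triangular:
  assumes A: "A \<in> carrier_mat n n" and wit: "similar_mat_wit A B P Q"
    and ut: "upper_triangular B"
  shows "mat_trace (A ^\<^sub>m k) = (\<Sum>i<n. B $$ (i,i) ^ k)"
proof -
  have B: "B \<in> carrier_mat n n"
    using similar_mat_witD2[OF A wit] by simp
  have "mat_trace (A ^\<^sub>m k) = mat_trace (B ^\<^sub>m k)"
    by (rule mat_trace_similar[OF similar_mat_wit_pow[OF wit]])
  then show ?thesis
    using B by (simp add: mat_trace_eq_sum[of _ n] diag_pow_upper_triangular[OF B ut])
qed

lemma mat_trace_idempotent:
  fixes A :: "complex mat"
  assumes A: "A \<in> carrier_mat n n" and idem: "A * A = A"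
  obtains k where "k \<le> n" and "mat_trace A = of_nat k"
proof -
  obtain B P Q where wit: "similar_mat_wit A B P Q" and ut: "upper_triangular B"
    using similar_upper_triangular_exists[OF A] .
  have square: "A ^\<^sub>m 2 = A ^\<^sub>m 1"
    using A idem by (simp add: numeral_2_eq_2)
  have diag_idem: "B $$ (i,i) ^ 2 = B $$ (i,i) ^ 1" if "i < n" for i
    using diag_upper_triangular_pow_eq[OF A wit ut square that] .
  have diag01: "B $$ (i,i) = 0 \<or> B $$ (i,i) = 1" if "i < n" for i
  proof -
    have "B $$ (i,i) * (B $$ (i,i) - 1) = 0"
      using \<open>i < n\<close> diag_idem by (simp add: power2_eq_square algebra_simps)
    then show ?thesis by simp
  qed
  let ?K = "{i. i < n \<and> B $$ (i,i) = 1}"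
  have "mat_trace A = (\<Sum>i<n. B $$ (i,i))"
    using mat_trace_pow_upper_triangular[OF A wit ut, of 1] A by simp
  also have "\<dots> = (\<Sum>i\<in>?K. 1)"
    by (rule sum.mono_neutral_cong_right) (use diag01 in auto)
  also have "\<dots> = of_nat (card ?K)"
    by simp
  finally show ?thesis
    using that card_mono[of "{..<n}" ?K] by fastforce
qed

lemma mat_trace_pow_pred_finite_order:
  fixes A :: "complex mat"
  assumes A: "A \<in> carrier_mat n n" and k: "k > 0" and Ak: "A ^\<^sub>m k = 1\<^sub>m n"
  shows "mat_trace (A ^\<^sub>m (k - 1)) = cnj (mat_trace A)"
proof -
  obtain B P Q where wit: "similar_mat_wit A B P Q" and ut: "upper_triangular B"
    using similar_upper_triangular_exists[OF A] .
  have order: "A ^\<^sub>m k = A ^\<^sub>m 0"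
    using Ak A by simp
  have root: "B $$ (i,i) ^ k = 1" if "i < n" for i
    using diag_upper_triangular_pow_eq[OF A wit ut order that] by simp
  have "B $$ (i,i) ^ (k - 1) = cnj (B $$ (i,i))" if i: "i < n" for i
  proof -
    let ?b = "B $$ (i,i)"
    have "cmod ?b = 1"
      using power_eq_1_iff[OF root[OF i]] k by simp
    then have "?b * cnj ?b = 1"
      using complex_norm_square[of ?b] by simp
    moreover have "?b * ?b ^ (k - 1) = 1"
      using root[OF i] k by (simp flip: power_Suc)
    ultimately show ?thesis
      by (metis inverse_unique)
  qed
  then have "mat_trace (A ^\<^sub>m (k - 1)) = cnj (\<Sum>i<n. B $$ (i,i))"
    by (simp add: mat_trace_pow_upper_triangular[OF A wit ut])
  also have "(\<Sum>i<n. B $$ (i,i)) = mat_trace A"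
    using mat_trace_pow_upper_triangular[OF A wit ut, of 1] A by simp
  finally show ?thesis .
qed

lemma eigenvector_exists:
  fixes T :: "complex mat"
  assumes T: "T \<in> carrier_mat n n" and n: "n > 0"
  obtains a v where "v \<in> carrier_vec n" and "v \<noteq> 0\<^sub>v n" and "T *\<^sub>v v = a \<cdot>\<^sub>v v"
proof -
  obtain as where cp: "char_poly T = (\<Prod>a\<leftarrow>as. [:- a, 1:])" and l: "length as = n"
    using char_poly_factorized[OF T] by auto
  then obtain a where a: "a \<in> set as"
    using n by (cases as) auto
  have "poly (char_poly T) a = 0"
    unfolding cp poly_prod_list using a by (auto simp: prod_list_zero_iff)
  then have "eigenvalue T a"
    using eigenvalue_root_char_poly[OF T] by simp
  then show ?thesis
    using that T unfolding eigenvalue_def eigenvector_def by auto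
qed

section \<open>Sums of matrices, matrix units and Kronecker products\<close>

definition mat_sum :: "nat \<Rightarrow> nat \<Rightarrow> ('x \<Rightarrow> 'a :: comm_monoid_add mat) \<Rightarrow> 'x set \<Rightarrow> 'a mat" where
  "mat_sum nr nc M S = mat nr nc (\<lambda>(i,j). \<Sum>x\<in>S. M x $$ (i,j))"

lemma mat_sum_carrier [simp]: "mat_sum nr nc M S \<in> carrier_mat nr nc"
  and dim_mat_sum [simp]: "dim_row (mat_sum nr nc M S) = nr" "dim_col (mat_sum nr nc M S) = nc"
  unfolding mat_sum_def by simp_all

lemma index_mat_sum [simp]:
  "i < nr \<Longrightarrow> j < nc \<Longrightarrow> mat_sum nr nc M S $$ (i,j) = (\<Sum>x\<in>S. M x $$ (i,j))"
  unfolding mat_sum_def by simp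

lemma mat_sum_cong: "(\<And>x. x \<in> S \<Longrightarrow> M x = M' x) \<Longrightarrow> mat_sum nr nc M S = mat_sum nr nc M' S"
  unfolding mat_sum_def by (auto intro!: sum.cong)

lemma mat_sum_reindex_bij_betw:
  "bij_betw h S' S \<Longrightarrow> mat_sum nr nc M S = mat_sum nr nc (\<lambda>x. M (h x)) S'"
  unfolding mat_sum_def by (auto simp: sum.reindex_bij_betw[of h S' S, symmetric])

lemma mult_mat_sum:
  fixes A :: "'a :: semiring_0 mat"
  assumes A: "A \<in> carrier_mat nr n" and M: "\<And>x. x \<in> S \<Longrightarrow> M x \<in> carrier_mat n nc"
  shows "A * mat_sum n nc M S = mat_sum nr nc (\<lambda>x. A * M x) S"
proof (rule eq_matI)
  fix i j assume "i < dim_row (mat_sum nr nc (\<lambda>x. A * M x) S)"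
    and "j < dim_col (mat_sum nr nc (\<lambda>x. A * M x) S)"
  then have i: "i < nr" and j: "j < nc"
    by auto
  have "(A * mat_sum n nc M S) $$ (i,j) = (\<Sum>p<n. A $$ (i,p) * (\<Sum>x\<in>S. M x $$ (p,j)))"
    using A i j by (auto simp: scalar_prod_def intro!: sum.cong)
  also have "\<dots> = (\<Sum>x\<in>S. \<Sum>p<n. A $$ (i,p) * M x $$ (p,j))"
    by (simp add: sum_distrib_left sum.swap[of _ S])
  also have "\<dots> = (\<Sum>x\<in>S. (A * M x) $$ (i,j))"
    using A M i j by (intro sum.cong) (simp_all add: index_mult_mat_sum[of _ nr n _ nc])
  finally show "(A * mat_sum n nc M S) $$ (i,j) = mat_sum nr nc (\<lambda>x. A * M x) S $$ (i,j)"
    using i j by simp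
qed (use A in auto)

lemma mat_sum_mult:
  fixes A :: "'a :: semiring_0 mat"
  assumes A: "A \<in> carrier_mat n nc" and M: "\<And>x. x \<in> S \<Longrightarrow> M x \<in> carrier_mat nr n"
  shows "mat_sum nr n M S * A = mat_sum nr nc (\<lambda>x. M x * A) S"
proof (rule eq_matI)
  fix i j assume "i < dim_row (mat_sum nr nc (\<lambda>x. M x * A) S)"
    and "j < dim_col (mat_sum nr nc (\<lambda>x. M x * A) S)"
  then have i: "i < nr" and j: "j < nc"
    by auto
  have "(mat_sum nr n M S * A) $$ (i,j) = (\<Sum>p<n. (\<Sum>x\<in>S. M x $$ (i,p)) * A $$ (p,j))"
    using A i j by (auto simp: scalar_prod_def intro!: sum.cong)
  also have "\<dots> = (\<Sum>x\<in>S. \<Sum>p<n. M x $$ (i,p) * A $$ (p,j))"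
    by (simp add: sum_distrib_right sum.swap[of _ S])
  also have "\<dots> = (\<Sum>x\<in>S. (M x * A) $$ (i,j))"
    using A M i j by (intro sum.cong) (simp_all add: index_mult_mat_sum[of _ nr n _ nc])
  finally show "(mat_sum nr n M S * A) $$ (i,j) = mat_sum nr nc (\<lambda>x. M x * A) S $$ (i,j)"
    using i j by simp
qed (use A in auto)

lemma mat_trace_mat_sum:
  assumes "\<And>x. x \<in> S \<Longrightarrow> M x \<in> carrier_mat n n"
  shows "mat_trace (mat_sum n n M S) = (\<Sum>x\<in>S. mat_trace (M x))"
  using assms by (simp add: mat_trace_eq_sum[of _ n] sum.swap[of _ S])

definition matrix_unit :: "nat \<Rightarrow> nat \<Rightarrow> nat \<Rightarrow> nat \<Rightarrow> 'a :: zero_neq_one mat" where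
  "matrix_unit nr nc j k = mat nr nc (\<lambda>(p,q). if p = j \<and> q = k then 1 else 0)"

lemma matrix_unit_carrier [simp]: "matrix_unit nr nc j k \<in> carrier_mat nr nc"
  and dim_matrix_unit [simp]:
    "dim_row (matrix_unit nr nc j k) = nr" "dim_col (matrix_unit nr nc j k) = nc"
  unfolding matrix_unit_def by simp_all

lemma mat_trace_matrix_unit: "j < n \<Longrightarrow> mat_trace (matrix_unit n n j k) = (if j = k then 1 else 0)"
  by (simp add: mat_trace_eq_sum[of _ n] matrix_unit_def)

lemma index_mult_matrix_unit_mult:
  fixes A B :: "'a :: semiring_1 mat"
  assumes A: "A \<in> carrier_mat na nb" and B: "B \<in> carrier_mat nc nd"
    and j: "j < nb" and k: "k < nc" and i: "i < na" and l: "l < nd"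
  shows "(A * matrix_unit nb nc j k * B) $$ (i,l) = A $$ (i,j) * B $$ (k,l)"
proof -
  have AE: "(A * matrix_unit nb nc j k) $$ (i,q) = (if q = k then A $$ (i,j) else 0)"
    if q: "q < nc" for q
  proof -
    have "(A * matrix_unit nb nc j k) $$ (i,q)
        = (\<Sum>p<nb. A $$ (i,p) * (if p = j \<and> q = k then 1 else 0))"
      using A i q by (auto simp: scalar_prod_def matrix_unit_def intro!: sum.cong)
    also have "\<dots> = (if q = k then A $$ (i,j) else 0)"
      using j by (auto simp: if_distrib cong: if_cong)
    finally show ?thesis .
  qed
  have "(A * matrix_unit nb nc j k * B) $$ (i,l)
      = (\<Sum>q<nc. (A * matrix_unit nb nc j k) $$ (i,q) * B $$ (q,l))"
    using A B i l by (auto simp: scalar_prod_def intro!: sum.cong)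
  also have "\<dots> = (\<Sum>q<nc. if q = k then A $$ (i,j) * B $$ (q,l) else 0)"
    using AE by (intro sum.cong) simp_all
  also have "\<dots> = A $$ (i,j) * B $$ (k,l)"
    using k by simp
  finally show ?thesis .
qed

lemma sum_lessThan_mult:
  fixes g :: "nat \<Rightarrow> 'a :: comm_monoid_add"
  shows "(\<Sum>k<a * b. g k) = (\<Sum>p<a. \<Sum>q<b. g (p * b + q))"
proof -
  have "(\<Sum>k<a * b. g k) = (\<Sum>p<a. sum g {p * b..<p * b + b})"
    by (rule sum.nat_group[symmetric])
  also have "\<dots> = (\<Sum>p<a. \<Sum>q<b. g (p * b + q))"
  proof (rule sum.cong[OF refl])
    fix p
    show "sum g {p * b..<p * b + b} = (\<Sum>q<b. g (p * b + q))"
      by (rule sum.reindex_bij_witness[where j = "\<lambda>k. k - p * b" and i = "\<lambda>q. p * b + q"]) auto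
  qed
  finally show ?thesis .
qed

lemma mult_add_less_mult:
  fixes p q a b :: nat
  assumes "p < a" and "q < b"
  shows "p * b + q < a * b"
proof -
  have "p * b + q < Suc p * b"
    using assms(2) by simp
  also have "\<dots> \<le> a * b"
    using assms(1) by (intro mult_le_mono1) simp
  finally show ?thesis .
qed

definition kronecker_mat :: "nat \<Rightarrow> nat \<Rightarrow> 'a :: times mat \<Rightarrow> 'a mat \<Rightarrow> 'a mat" where
  "kronecker_mat a b A B =
    mat (a * b) (a * b) (\<lambda>(i,j). A $$ (i div b, j div b) * B $$ (i mod b, j mod b))"

lemma kronecker_mat_carrier [simp]: "kronecker_mat a b A B \<in> carrier_mat (a * b) (a * b)"
  and dim_kronecker_mat [simp]:
    "dim_row (kronecker_mat a b A B) = a * b" "dim_col (kronecker_mat a b A B) = a * b"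
  unfolding kronecker_mat_def by simp_all

lemma index_kronecker_mat:
  "i < a * b \<Longrightarrow> j < a * b \<Longrightarrow>
    kronecker_mat a b A B $$ (i,j) = A $$ (i div b, j div b) * B $$ (i mod b, j mod b)"
  unfolding kronecker_mat_def by simp

lemma index_kronecker_mat_split:
  "p < a \<Longrightarrow> q < b \<Longrightarrow> p' < a \<Longrightarrow> q' < b \<Longrightarrow>
    kronecker_mat a b A B $$ (p * b + q, p' * b + q') = A $$ (p,p') * B $$ (q,q')"
  by (simp add: index_kronecker_mat mult_add_less_mult)

lemma kronecker_mat_mult:
  fixes A :: "'a :: comm_semiring_0 mat"
  assumes A: "A \<in> carrier_mat a a" and A': "A' \<in> carrier_mat a a"
    and B: "B \<in> carrier_mat b b" and B': "B' \<in> carrier_mat b b"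
  shows "kronecker_mat a b (A * A') (B * B') = kronecker_mat a b A B * kronecker_mat a b A' B'"
proof (rule eq_matI)
  fix i j assume "i < dim_row (kronecker_mat a b A B * kronecker_mat a b A' B')"
    and "j < dim_col (kronecker_mat a b A B * kronecker_mat a b A' B')"
  then have i: "i < a * b" and j: "j < a * b"
    by auto
  then have b: "b > 0"
    by (cases b) auto
  have idiv: "i div b < a" "j div b < a" and imod: "i mod b < b" "j mod b < b"
    using i j b by (auto simp: less_mult_imp_div_less)
  have "(kronecker_mat a b A B * kronecker_mat a b A' B') $$ (i,j)
      = (\<Sum>p<a. \<Sum>q<b. kronecker_mat a b A B $$ (i, p * b + q) * kronecker_mat a b A' B' $$ (p * b + q, j))"
    using i j by (subst index_mult_mat_sum[of _ "a * b" "a * b" _ "a * b"]) (simp_all add: sum_lessThan_mult)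
  also have "\<dots> = (\<Sum>p<a. \<Sum>q<b. (A $$ (i div b, p) * A' $$ (p, j div b)) *
      (B $$ (i mod b, q) * B' $$ (q, j mod b)))"
    using i j by (intro sum.cong refl) (simp add: index_kronecker_mat mult_add_less_mult mult_ac)
  also have "\<dots> = (A * A') $$ (i div b, j div b) * (B * B') $$ (i mod b, j mod b)"
    using index_mult_mat_sum[OF A A' idiv] index_mult_mat_sum[OF B B' imod] by (simp add: sum_product)
  finally show "kronecker_mat a b (A * A') (B * B') $$ (i,j) =
      (kronecker_mat a b A B * kronecker_mat a b A' B') $$ (i,j)"
    using i j by (simp add: index_kronecker_mat)
qed auto

lemma kronecker_mat_one: "kronecker_mat a b (1\<^sub>m a) (1\<^sub>m b) = (1\<^sub>m (a * b) :: 'a :: semiring_1 mat)"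
proof (rule eq_matI)
  fix i j assume "i < dim_row (1\<^sub>m (a * b) :: 'a mat)" "j < dim_col (1\<^sub>m (a * b) :: 'a mat)"
  then have i: "i < a * b" and j: "j < a * b"
    by auto
  then have b: "b > 0"
    by (cases b) auto
  have "(i div b = j div b \<and> i mod b = j mod b) = (i = j)"
    by (metis div_mult_mod_eq)
  then show "kronecker_mat a b (1\<^sub>m a) (1\<^sub>m b) $$ (i,j) = (1\<^sub>m (a * b) :: 'a mat) $$ (i,j)"
    using i j b by (auto simp: index_kronecker_mat less_mult_imp_div_less)
qed auto

lemma mat_trace_kronecker_mat:
  assumes A: "A \<in> carrier_mat a a" and B: "B \<in> carrier_mat b b"
  shows "mat_trace (kronecker_mat a b A B) = mat_trace A * mat_trace B"
  using A B by (simp add: mat_trace_eq_sum[of _ "a * b"] mat_trace_eq_sum[of _ a] mat_trace_eq_sum[of _ b]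
      sum_lessThan_mult index_kronecker_mat_split sum_product)

section \<open>Representations and Schur's lemma\<close>

lemma rep_carrier: "rep G d \<rho> \<Longrightarrow> g \<in> carrier G \<Longrightarrow> \<rho> g \<in> carrier_mat d d"
  unfolding rep_def by auto

lemma rep_one: "rep G d \<rho> \<Longrightarrow> \<rho> \<one>\<^bsub>G\<^esub> = 1\<^sub>m d"
  unfolding rep_def by auto

lemma rep_mult:
  "rep G d \<rho> \<Longrightarrow> g \<in> carrier G \<Longrightarrow> h \<in> carrier G \<Longrightarrow> \<rho> (g \<otimes>\<^bsub>G\<^esub> h) = \<rho> g * \<rho> h"
  unfolding rep_def by auto

lemma irrepD: "irrep G d \<rho> \<Longrightarrow> rep G d \<rho>" "irrep G d \<rho> \<Longrightarrow> d > 0"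
  unfolding irrep_def by auto

lemma character_eq_mat_trace: "g \<in> carrier G \<Longrightarrow> character G \<rho> g = mat_trace (\<rho> g)"
  unfolding character_def by simp

lemma character_eq_sum_diag:
  "rep G d \<rho> \<Longrightarrow> g \<in> carrier G \<Longrightarrow> character G \<rho> g = (\<Sum>i<d. \<rho> g $$ (i,i))"
  by (simp add: character_eq_mat_trace mat_trace_eq_sum rep_carrier)

lemma irr_charsE:
  assumes "\<chi> \<in> irr_chars G"
  obtains d \<rho> where "irrep G d \<rho>" and "\<chi> = character G \<rho>"
  using assms unfolding irr_chars_def by blast

definition tensor_rep :: "nat \<Rightarrow> nat \<Rightarrow> ('a \<Rightarrow> complex mat) \<Rightarrow> ('a \<Rightarrow> complex mat) \<Rightarrow> 'a \<Rightarrow> complex mat" where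
  "tensor_rep a b \<rho> \<rho>' = (\<lambda>g. kronecker_mat a b (\<rho> g) (\<rho>' g))"

lemma rep_tensor_rep:
  assumes "rep G a \<rho>" and "rep G b \<rho>'"
  shows "rep G (a * b) (tensor_rep a b \<rho> \<rho>')"
  using assms unfolding rep_def tensor_rep_def by (auto simp: kronecker_mat_one kronecker_mat_mult)

lemma character_tensor_rep:
  assumes "rep G a \<rho>" and "rep G b \<rho>'"
  shows "character G (tensor_rep a b \<rho> \<rho>') = (\<lambda>g. character G \<rho> g * character G \<rho>' g)"
  using assms by (auto simp: character_def tensor_rep_def mat_trace_kronecker_mat rep_carrier)

lemma irrep_intertwiner_injective:
  assumes irr: "irrep G c \<sigma>" and r: "rep G b \<tau>" and T: "T \<in> carrier_mat b c"
    and int: "\<And>h. h \<in> carrier G \<Longrightarrow> \<tau> h * T = T * \<sigma> h"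
    and nz: "T \<noteq> 0\<^sub>m b c" and v: "v \<in> carrier_vec c" and Tv: "T *\<^sub>v v = 0\<^sub>v b"
  shows "v = 0\<^sub>v c"
proof -
  let ?W = "{v \<in> carrier_vec c. T *\<^sub>v v = 0\<^sub>v b}"
  have s: "rep G c \<sigma>"
    using irrepD[OF irr] by simp
  have inv: "\<sigma> h *\<^sub>v v \<in> ?W" if h: "h \<in> carrier G" and v: "v \<in> ?W" for h v
  proof -
    have sh: "\<sigma> h \<in> carrier_mat c c" and th: "\<tau> h \<in> carrier_mat b b"
      using rep_carrier[OF s h] rep_carrier[OF r h] .
    have "T *\<^sub>v (\<sigma> h *\<^sub>v v) = (\<tau> h * T) *\<^sub>v v"
      using T sh v int[OF h] by (simp flip: assoc_mult_mat_vec)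
    also have "\<dots> = 0\<^sub>v b"
      using T th v by (auto intro!: eq_vecI)
    finally show ?thesis
      using sh v by auto
  qed
  have "?W \<noteq> carrier_vec c"
    using zero_mat_if_mult_vec_zero[OF T] nz by auto
  then have "?W = {0\<^sub>v c}"
    using irr subspace_vec_kernel[OF T] inv unfolding irrep_def by blast
  then show ?thesis
    using v Tv by auto
qed

lemma irrep_commutant_scalar:
  assumes irr: "irrep G b \<tau>" and T: "T \<in> carrier_mat b b"
    and int: "\<And>h. h \<in> carrier G \<Longrightarrow> \<tau> h * T = T * \<tau> h"
  obtains a where "T = a \<cdot>\<^sub>m 1\<^sub>m b"
proof -
  note r = irrepD(1)[OF irr]
  obtain a v where v: "v \<in> carrier_vec b" "v \<noteq> 0\<^sub>v b" and Tv: "T *\<^sub>v v = a \<cdot>\<^sub>v v"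
    using eigenvector_exists[OF T irrepD(2)[OF irr]] .
  let ?S = "T - a \<cdot>\<^sub>m 1\<^sub>m b"
  have S: "?S \<in> carrier_mat b b"
    using T by auto
  have "?S = 0\<^sub>m b b"
  proof (rule ccontr)
    assume nz: "?S \<noteq> 0\<^sub>m b b"
    have "\<tau> h * ?S = ?S * \<tau> h" if h: "h \<in> carrier G" for h
      using rep_carrier[OF r h] T int[OF h]
      by (simp add: mult_minus_distrib_mat minus_mult_distrib_mat mult_smult_one_mat
          smult_one_mat_mult)
    moreover have "(a \<cdot>\<^sub>m 1\<^sub>m b) *\<^sub>v v = a \<cdot>\<^sub>v (1\<^sub>m b *\<^sub>v v)"
      using v by auto
    then have "?S *\<^sub>v v = 0\<^sub>v b"
      using T v Tv by (simp add: minus_mult_distrib_mat_vec)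
    ultimately have "v = 0\<^sub>v b"
      using irrep_intertwiner_injective[OF irr r S _ nz v(1)] by simp
    with v show False
      by simp
  qed
  have "T = a \<cdot>\<^sub>m 1\<^sub>m b"
  proof (rule eq_matI)
    fix i j assume "i < dim_row (a \<cdot>\<^sub>m 1\<^sub>m b)" and "j < dim_col (a \<cdot>\<^sub>m 1\<^sub>m b)"
    then show "T $$ (i,j) = (a \<cdot>\<^sub>m 1\<^sub>m b) $$ (i,j)"
      using \<open>?S = 0\<^sub>m b b\<close> T by (metis index_minus_mat(1) index_zero_mat(1) right_minus_eq
          carrier_matD index_smult_mat(2,3) index_one_mat(2,3))
  qed (use T in auto)
  then show ?thesis ..
qed

lemma character_eq_if_intertwiners:
  assumes irr\<tau>: "irrep G b \<tau>" and irr\<sigma>: "irrep G c \<sigma>"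
    and T: "T \<in> carrier_mat b c" and S: "S \<in> carrier_mat c b"
    and T_int: "\<And>h. h \<in> carrier G \<Longrightarrow> \<tau> h * T = T * \<sigma> h"
    and S_int: "\<And>h. h \<in> carrier G \<Longrightarrow> \<sigma> h * S = S * \<tau> h"
    and T_nz: "T \<noteq> 0\<^sub>m b c" and S_nz: "S \<noteq> 0\<^sub>m c b"
  shows "character G \<tau> = character G \<sigma>"
proof -
  note r\<tau> = irrepD(1)[OF irr\<tau>] and r\<sigma> = irrepD(1)[OF irr\<sigma>]
  obtain i l where i: "i < b" and l: "l < c" and Til: "T $$ (i,l) \<noteq> 0"
    using nonzero_matE[OF T T_nz] .
  obtain \<alpha> where \<alpha>: "S * T = \<alpha> \<cdot>\<^sub>m 1\<^sub>m c"
    using irrep_commutant_scalar[OF irr\<sigma>, of "S * T"] S T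
      intertwines_mult[OF rep_carrier[OF r\<sigma>] rep_carrier[OF r\<tau>] rep_carrier[OF r\<sigma>] S T]
      S_int T_int by auto
  obtain \<beta> where \<beta>: "T * S = \<beta> \<cdot>\<^sub>m 1\<^sub>m b"
    using irrep_commutant_scalar[OF irr\<tau>, of "T * S"] S T
      intertwines_mult[OF rep_carrier[OF r\<tau>] rep_carrier[OF r\<sigma>] rep_carrier[OF r\<tau>] T S]
      S_int T_int by auto
  have "\<alpha> \<noteq> 0"
  proof
    assume "\<alpha> = 0"
    then have "S *\<^sub>v (T *\<^sub>v unit_vec c l) = 0\<^sub>v c"
      using S T \<alpha> by (auto simp flip: assoc_mult_mat_vec intro!: eq_vecI)
    then have "T *\<^sub>v unit_vec c l = 0\<^sub>v b"
      using irrep_intertwiner_injective[OF irr\<tau> r\<sigma> S S_int S_nz] T by simp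
    moreover have "(T *\<^sub>v unit_vec c l) $ i \<noteq> 0"
      using Til T i l by simp
    ultimately show False
      using i by simp
  qed
  have "\<alpha> \<cdot>\<^sub>m T = \<beta> \<cdot>\<^sub>m T"
    using S T \<alpha> \<beta> assoc_mult_mat[OF T S T] by (simp add: mult_smult_one_mat smult_one_mat_mult)
  then have "\<alpha> = \<beta>"
    using T Til i l by (metis index_smult_mat(1) carrier_matD mult_cancel_right)
  have "mat_trace (\<tau> g) = mat_trace (\<sigma> g)" if g: "g \<in> carrier G" for g
    using mat_trace_eq_if_intertwined[OF rep_carrier[OF r\<tau> g] rep_carrier[OF r\<sigma> g] T S T_int[OF g]]
      \<alpha> \<beta> \<open>\<alpha> = \<beta>\<close> \<open>\<alpha> \<noteq> 0\<close> by simp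
  then show ?thesis
    by (auto simp: character_def)
qed

context group
begin

lemma rep_inv_mult: "rep G d \<rho> \<Longrightarrow> g \<in> carrier G \<Longrightarrow> \<rho> (inv g) * \<rho> g = 1\<^sub>m d"
  using rep_mult[of G d \<rho> "inv g" g] rep_one[of G d \<rho>] by simp

lemma rep_pow:
  assumes r: "rep G d \<rho>" and g: "g \<in> carrier G"
  shows "\<rho> (g [^] (k::nat)) = \<rho> g ^\<^sub>m k"
proof (induction k)
  case (Suc k)
  then show ?case
    using rep_mult[OF r, of "g [^] k" g] g by simp
qed (use rep_one[OF r] rep_carrier[OF r g] in simp)

lemma character_one: "rep G d \<rho> \<Longrightarrow> character G \<rho> \<one> = of_nat d"
  by (simp add: character_eq_mat_trace rep_one mat_trace_def)

lemma char_dim_character: "rep G d \<rho> \<Longrightarrow> char_dim G (character G \<rho>) = real d"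
  by (simp add: char_dim_def character_one)

lemma bij_betw_mult_left: "h \<in> carrier G \<Longrightarrow> bij_betw (\<lambda>g. h \<otimes> g) (carrier G) (carrier G)"
  by (rule bij_betw_byWitness[where f' = "\<lambda>g. inv h \<otimes> g"]) (auto simp: m_assoc[symmetric])

lemma bij_betw_inv: "bij_betw (\<lambda>g. inv g) (carrier G) (carrier G)"
  by (rule bij_betw_byWitness[where f' = "\<lambda>g. inv g"]) auto

end

locale finite_group = group +
  assumes finite_carrier: "finite (carrier G)"
begin

lemma card_carrier_pos: "card (carrier G) > 0"
  using finite_carrier by (auto simp: card_gt_0_iff)

lemma character_inv:
  assumes r: "rep G d \<rho>" and g: "g \<in> carrier G"
  shows "character G \<rho> (inv g) = cnj (character G \<rho> g)"
proof -
  let ?k = "Coset.order G"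
  have k: "?k > 0"
    using card_carrier_pos by (simp add: Coset.order_def)
  have "g [^] (?k - 1) \<otimes> g = g [^] ?k"
    using k g by (metis Suc_diff_1 nat_pow_Suc)
  then have "inv g = g [^] (?k - 1)"
    using pow_order_eq_1[OF g] g by (metis inv_equality nat_pow_closed)
  moreover have "\<rho> g ^\<^sub>m ?k = 1\<^sub>m d"
    using rep_pow[OF r g] pow_order_eq_1[OF g] rep_one[OF r] by metis
  ultimately show ?thesis
    using mat_trace_pow_pred_finite_order[OF rep_carrier[OF r g] k] rep_pow[OF r g] g
    by (simp add: character_eq_mat_trace)
qed

end

section \<open>Schur orthogonality\<close>

definition intertwiner_avg ::
    "('a, 'b) monoid_scheme \<Rightarrow> ('a \<Rightarrow> complex mat) \<Rightarrow> ('a \<Rightarrow> complex mat) \<Rightarrow> nat \<Rightarrow> nat \<Rightarrow>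
      complex mat \<Rightarrow> complex mat" where
  "intertwiner_avg G \<tau> \<sigma> b c X = mat_sum b c (\<lambda>g. \<tau> g * X * \<sigma> (inv\<^bsub>G\<^esub> g)) (carrier G)"

definition coeff_pairing ::
    "('a, 'b) monoid_scheme \<Rightarrow> ('a \<Rightarrow> complex mat) \<Rightarrow> ('a \<Rightarrow> complex mat) \<Rightarrow>
      nat \<Rightarrow> nat \<Rightarrow> nat \<Rightarrow> nat \<Rightarrow> complex" where
  "coeff_pairing G \<tau> \<sigma> i j k l = (\<Sum>g\<in>carrier G. \<tau> g $$ (i,j) * \<sigma> (inv\<^bsub>G\<^esub> g) $$ (k,l))"

lemma intertwiner_avg_carrier [simp]: "intertwiner_avg G \<tau> \<sigma> b c X \<in> carrier_mat b c"
  unfolding intertwiner_avg_def by simp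

context group
begin

lemma intertwiner_avg_intertwines:
  assumes \<tau>: "rep G b \<tau>" and \<sigma>: "rep G c \<sigma>" and X: "X \<in> carrier_mat b c" and h: "h \<in> carrier G"
  shows "\<tau> h * intertwiner_avg G \<tau> \<sigma> b c X = intertwiner_avg G \<tau> \<sigma> b c X * \<sigma> h"
proof -
  note \<tau>c = rep_carrier[OF \<tau>] and \<sigma>c = rep_carrier[OF \<sigma>]
  let ?M = "\<lambda>g. \<tau> g * X * \<sigma> (inv g)"
  have M: "?M g \<in> carrier_mat b c" if "g \<in> carrier G" for g
    using \<tau>c \<sigma>c X that by (meson inv_closed mult_carrier_mat)
  have "\<tau> h * intertwiner_avg G \<tau> \<sigma> b c X = mat_sum b c (\<lambda>g. \<tau> h * ?M g) (carrier G)"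
    unfolding intertwiner_avg_def by (rule mult_mat_sum[OF \<tau>c[OF h] M])
  also have "\<dots> = mat_sum b c (\<lambda>g. ?M (h \<otimes> g) * \<sigma> h) (carrier G)"
  proof (rule mat_sum_cong)
    fix g assume g: "g \<in> carrier G"
    have "\<sigma> (inv (h \<otimes> g)) * \<sigma> h = \<sigma> (inv g)"
      using rep_mult[OF \<sigma>, of "inv (h \<otimes> g)" h] g h by (simp add: inv_mult_group m_assoc)
    then show "\<tau> h * ?M g = ?M (h \<otimes> g) * \<sigma> h"
      using rep_mult[OF \<tau> h g] \<tau>c[OF h] \<tau>c[OF g] \<tau>c[of "h \<otimes> g"] X \<sigma>c[OF h] \<sigma>c[of "inv g"]
        \<sigma>c[of "inv (h \<otimes> g)"] g h
      by (simp add: assoc_mult_mat[of _ b b _ b _ c] assoc_mult_mat[of _ b c _ c _ c]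
          assoc_mult_mat[of _ b b _ c _ c])
  qed
  also have "\<dots> = mat_sum b c (\<lambda>g. ?M g * \<sigma> h) (carrier G)"
    by (rule mat_sum_reindex_bij_betw[OF bij_betw_mult_left[OF h], symmetric])
  also have "\<dots> = intertwiner_avg G \<tau> \<sigma> b c X * \<sigma> h"
    unfolding intertwiner_avg_def by (rule mat_sum_mult[OF \<sigma>c[OF h] M, symmetric])
  finally show ?thesis .
qed

lemma index_intertwiner_avg_matrix_unit:
  assumes "rep G b \<tau>" and "rep G c \<sigma>" and "i < b" and "j < b" and "k < c" and "l < c"
  shows "intertwiner_avg G \<tau> \<sigma> b c (matrix_unit b c j k) $$ (i,l) = coeff_pairing G \<tau> \<sigma> i j k l"
  unfolding intertwiner_avg_def coeff_pairing_def using assms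
  by (auto intro!: sum.cong index_mult_matrix_unit_mult rep_carrier)

lemma coeff_pairing_swap: "coeff_pairing G \<tau> \<sigma> i j k l = coeff_pairing G \<sigma> \<tau> k l i j"
  unfolding coeff_pairing_def
  using sum.reindex_bij_betw[OF bij_betw_inv, of "\<lambda>g. \<sigma> g $$ (k,l) * \<tau> (inv g) $$ (i,j)"]
  by (simp add: mult.commute)

lemma mat_trace_intertwiner_avg:
  assumes \<tau>: "rep G b \<tau>" and X: "X \<in> carrier_mat b b"
  shows "mat_trace (intertwiner_avg G \<tau> \<tau> b b X) = of_nat (card (carrier G)) * mat_trace X"
proof -
  note \<tau>c = rep_carrier[OF \<tau>]
  have "mat_trace (\<tau> g * X * \<tau> (inv g)) = mat_trace X" if g: "g \<in> carrier G" for g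
  proof -
    have "mat_trace (\<tau> g * X * \<tau> (inv g)) = mat_trace (\<tau> (inv g) * (\<tau> g * X))"
      using \<tau>c[OF g] \<tau>c[of "inv g"] g X by (intro mat_trace_mult_comm[of _ b b]) auto
    also have "\<tau> (inv g) * (\<tau> g * X) = X"
      using \<tau>c[OF g] \<tau>c[of "inv g"] g X rep_inv_mult[OF \<tau> g]
      by (simp flip: assoc_mult_mat[of _ b b _ b _ b])
    finally show ?thesis .
  qed
  moreover have "\<tau> g * X * \<tau> (inv g) \<in> carrier_mat b b" if "g \<in> carrier G" for g
    using \<tau>c X that by (meson inv_closed mult_carrier_mat)
  ultimately show ?thesis
    unfolding intertwiner_avg_def by (simp add: mat_trace_mat_sum)
qed

lemma coeff_pairing_nonzero_imp_character_eq:
  assumes irr\<tau>: "irrep G b \<tau>" and irr\<sigma>: "irrep G c \<sigma>"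
    and i: "i < b" and j: "j < b" and k: "k < c" and l: "l < c"
    and nz: "coeff_pairing G \<tau> \<sigma> i j k l \<noteq> 0"
  shows "character G \<tau> = character G \<sigma>"
proof -
  note \<tau> = irrepD(1)[OF irr\<tau>] and \<sigma> = irrepD(1)[OF irr\<sigma>]
  define T where "T = intertwiner_avg G \<tau> \<sigma> b c (matrix_unit b c j k)"
  define S where "S = intertwiner_avg G \<sigma> \<tau> c b (matrix_unit c b l i)"
  have "T $$ (i,l) \<noteq> 0"
    unfolding T_def using index_intertwiner_avg_matrix_unit[OF \<tau> \<sigma> i j k l] nz by simp
  then have "T \<noteq> 0\<^sub>m b c"
    using i l by auto
  moreover have "S $$ (k,j) \<noteq> 0"
    unfolding S_def using index_intertwiner_avg_matrix_unit[OF \<sigma> \<tau> k l i j] nz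
    by (simp add: coeff_pairing_swap)
  then have "S \<noteq> 0\<^sub>m c b"
    using k j by auto
  ultimately show ?thesis
    using character_eq_if_intertwiners[OF irr\<tau> irr\<sigma>, of T S]
      intertwiner_avg_intertwines[OF \<tau> \<sigma>] intertwiner_avg_intertwines[OF \<sigma> \<tau>]
    unfolding T_def S_def by simp
qed

lemma coeff_pairing_self:
  assumes irr: "irrep G b \<tau>" and i: "i < b" and j: "j < b" and k: "k < b" and l: "l < b"
  shows "coeff_pairing G \<tau> \<tau> i j k l =
    (if j = k \<and> i = l then of_nat (card (carrier G)) / of_nat b else 0)"
proof -
  note \<tau> = irrepD(1)[OF irr] and b = irrepD(2)[OF irr]
  define A where "A = intertwiner_avg G \<tau> \<tau> b b (matrix_unit b b j k)"
  obtain \<alpha> where \<alpha>: "A = \<alpha> \<cdot>\<^sub>m 1\<^sub>m b"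
    using irrep_commutant_scalar[OF irr, of A] intertwiner_avg_intertwines[OF \<tau> \<tau>]
    unfolding A_def by fastforce
  have "\<alpha> * of_nat b = mat_trace A"
    using \<alpha> by (simp add: mat_trace_smult[of _ b] mat_trace_eq_sum[of _ b])
  also have "\<dots> = (if j = k then of_nat (card (carrier G)) else 0)"
    unfolding A_def using mat_trace_intertwiner_avg[OF \<tau>] mat_trace_matrix_unit[OF j] by simp
  finally have "\<alpha> = (if j = k then of_nat (card (carrier G)) / of_nat b else 0)"
    using b by (auto simp: field_simps)
  moreover have "coeff_pairing G \<tau> \<tau> i j k l = A $$ (i,l)"
    unfolding A_def using index_intertwiner_avg_matrix_unit[OF \<tau> \<tau> i j k l] by simp
  ultimately show ?thesis
    using \<alpha> i l by auto
qed

lemma sum_character_mult_character_inv: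
  assumes irr: "irrep G b \<tau>"
  shows "(\<Sum>g\<in>carrier G. character G \<tau> g * character G \<tau> (inv g)) = of_nat (card (carrier G))"
proof -
  note \<tau> = irrepD(1)[OF irr] and b = irrepD(2)[OF irr]
  have "(\<Sum>g\<in>carrier G. character G \<tau> g * character G \<tau> (inv g))
      = (\<Sum>g\<in>carrier G. (\<Sum>i<b. \<tau> g $$ (i,i)) * (\<Sum>k<b. \<tau> (inv g) $$ (k,k)))"
    by (simp add: character_eq_sum_diag[OF \<tau>])
  also have "\<dots> = (\<Sum>g\<in>carrier G. \<Sum>k<b. \<Sum>i<b. \<tau> g $$ (i,i) * \<tau> (inv g) $$ (k,k))"
    by (simp add: sum_distrib_left sum_distrib_right)
  also have "\<dots> = (\<Sum>k<b. \<Sum>i<b. coeff_pairing G \<tau> \<tau> i i k k)"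
    unfolding coeff_pairing_def by (subst sum.swap, rule sum.cong[OF refl], rule sum.swap)
  also have "\<dots> = (\<Sum>k<b. \<Sum>i<b. if k = i then of_nat (card (carrier G)) / of_nat b else 0)"
    by (intro sum.cong refl) (auto simp: coeff_pairing_self[OF irr])
  also have "\<dots> = of_nat (card (carrier G))"
    using b by simp
  finally show ?thesis .
qed

lemma character_convolution_coeff_pairing:
  assumes \<rho>: "rep G b \<rho>" and \<rho>': "rep G b' \<rho>'" and k: "k \<in> carrier G"
  shows "(\<Sum>g\<in>carrier G. character G \<rho> (inv g) * character G \<rho>' (inv k \<otimes> g))
       = (\<Sum>p<b'. \<Sum>q<b'. \<rho>' (inv k) $$ (p,q) * (\<Sum>i<b. coeff_pairing G \<rho>' \<rho> q p i i))"
proof -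
  have "character G \<rho>' (inv k \<otimes> g) = (\<Sum>p<b'. \<Sum>q<b'. \<rho>' (inv k) $$ (p,q) * \<rho>' g $$ (q,p))"
    if g: "g \<in> carrier G" for g
  proof -
    have "character G \<rho>' (inv k \<otimes> g) = mat_trace (\<rho>' (inv k) * \<rho>' g)"
      using g k by (simp add: character_eq_mat_trace rep_mult[OF \<rho>'])
    also have "\<dots> = (\<Sum>p<b'. (\<rho>' (inv k) * \<rho>' g) $$ (p,p))"
      using rep_carrier[OF \<rho>'] g k by (intro mat_trace_eq_sum) (meson inv_closed mult_carrier_mat)
    also have "\<dots> = (\<Sum>p<b'. \<Sum>q<b'. \<rho>' (inv k) $$ (p,q) * \<rho>' g $$ (q,p))"
      by (rule sum.cong[OF refl], rule index_mult_mat_sum) (use rep_carrier[OF \<rho>'] g k in auto)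
    finally show ?thesis .
  qed
  then have "(\<Sum>g\<in>carrier G. character G \<rho> (inv g) * character G \<rho>' (inv k \<otimes> g))
     = (\<Sum>g\<in>carrier G. (\<Sum>i<b. \<rho> (inv g) $$ (i,i)) *
          (\<Sum>p<b'. \<Sum>q<b'. \<rho>' (inv k) $$ (p,q) * \<rho>' g $$ (q,p)))"
    by (simp add: character_eq_sum_diag[OF \<rho>])
  also have "\<dots> = (\<Sum>g\<in>carrier G. \<Sum>p<b'. \<Sum>q<b'. \<Sum>i<b.
      \<rho>' (inv k) $$ (p,q) * (\<rho>' g $$ (q,p) * \<rho> (inv g) $$ (i,i)))"
    by (simp add: sum_distrib_left sum_distrib_right mult_ac)
  also have "\<dots> = (\<Sum>p<b'. \<Sum>q<b'. \<Sum>i<b. \<Sum>g\<in>carrier G.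
      \<rho>' (inv k) $$ (p,q) * (\<rho>' g $$ (q,p) * \<rho> (inv g) $$ (i,i)))"
    by (subst sum.swap, rule sum.cong[OF refl], subst sum.swap, rule sum.cong[OF refl], rule sum.swap)
  also have "\<dots> = (\<Sum>p<b'. \<Sum>q<b'. \<rho>' (inv k) $$ (p,q) *
      (\<Sum>i<b. \<Sum>g\<in>carrier G. \<rho>' g $$ (q,p) * \<rho> (inv g) $$ (i,i)))"
    by (simp add: sum_distrib_left)
  finally show ?thesis
    unfolding coeff_pairing_def .
qed

lemma character_convolution:
  assumes irr: "irrep G b \<tau>" and irr': "irrep G b' \<tau>'" and k: "k \<in> carrier G"
  shows "(\<Sum>g\<in>carrier G. character G \<tau> (inv g) * character G \<tau>' (inv k \<otimes> g))
       = (if character G \<tau> = character G \<tau>'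
          then of_nat (card (carrier G)) / of_nat b * character G \<tau> (inv k) else 0)"
proof (cases "character G \<tau> = character G \<tau>'")
  case True
  note \<tau> = irrepD(1)[OF irr]
  let ?c = "of_nat (card (carrier G)) / of_nat b :: complex"
  have "(\<Sum>i<b. coeff_pairing G \<tau> \<tau> q p i i) = (if p = q then ?c else 0)"
    if "p < b" "q < b" for p q
    using that by (simp add: coeff_pairing_self[OF irr] sum.delta cong: if_cong)
  then have "(\<Sum>g\<in>carrier G. character G \<tau> (inv g) * character G \<tau> (inv k \<otimes> g))
      = (\<Sum>p<b. \<Sum>q<b. \<tau> (inv k) $$ (p,q) * (if p = q then ?c else 0))"
    unfolding character_convolution_coeff_pairing[OF \<tau> \<tau> k] by (intro sum.cong refl) simp
  also have "\<dots> = (\<Sum>p<b. \<tau> (inv k) $$ (p,p) * ?c)"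
    by (rule sum.cong[OF refl]) (simp add: if_distrib cong: if_cong)
  also have "\<dots> = ?c * (\<Sum>p<b. \<tau> (inv k) $$ (p,p))"
    by (simp only: sum_distrib_left mult.commute)
  also have "\<dots> = ?c * character G \<tau> (inv k)"
    using k by (simp add: character_eq_sum_diag[OF \<tau>])
  finally show ?thesis
    using True by simp
next
  case False
  have "coeff_pairing G \<tau>' \<tau> q p i i = 0" if "q < b'" "p < b'" "i < b" for p q i
    using coeff_pairing_nonzero_imp_character_eq[OF irr' irr, of q p i i] that False by auto
  then show ?thesis
    using False by (simp add: character_convolution_coeff_pairing[OF irrepD(1)[OF irr] irrepD(1)[OF irr'] k])
qed

end

context finite_group
begin

lemma sum_cmod_character_sq:
  assumes irr: "irrep G b \<tau>"
  shows "(\<Sum>g\<in>carrier G. (cmod (character G \<tau> g))\<^sup>2) = real (card (carrier G))"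
proof -
  have "complex_of_real ((cmod (character G \<tau> g))\<^sup>2) = character G \<tau> g * character G \<tau> (inv g)"
    if "g \<in> carrier G" for g
    using complex_norm_square[of "character G \<tau> g"] character_inv[OF irrepD(1)[OF irr] that] by simp
  then have "complex_of_real (\<Sum>g\<in>carrier G. (cmod (character G \<tau> g))\<^sup>2)
      = of_nat (card (carrier G))"
    by (simp add: sum_character_mult_character_inv[OF irr])
  then show ?thesis
    by (metis of_real_eq_iff of_real_of_nat_eq)
qed

end

section \<open>Isotypic projections\<close>

definition group_algebra_rep ::
    "('a, 'b) monoid_scheme \<Rightarrow> ('a \<Rightarrow> complex mat) \<Rightarrow> nat \<Rightarrow> ('a \<Rightarrow> complex) \<Rightarrow> complex mat" where
  "group_algebra_rep G \<sigma> m a = mat_sum m m (\<lambda>g. a g \<cdot>\<^sub>m \<sigma> g) (carrier G)"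

lemma group_algebra_rep_carrier [simp]: "group_algebra_rep G \<sigma> m a \<in> carrier_mat m m"
  and dim_group_algebra_rep [simp]: "dim_row (group_algebra_rep G \<sigma> m a) = m" "dim_col (group_algebra_rep G \<sigma> m a) = m"
  unfolding group_algebra_rep_def by simp_all

lemma index_group_algebra_rep:
  "rep G m \<sigma> \<Longrightarrow> x < m \<Longrightarrow> y < m \<Longrightarrow> group_algebra_rep G \<sigma> m a $$ (x,y) = (\<Sum>g\<in>carrier G. a g * \<sigma> g $$ (x,y))"
  unfolding group_algebra_rep_def by (auto intro!: sum.cong dest: rep_carrier)

lemma group_algebra_rep_cong:
  "(\<And>g. g \<in> carrier G \<Longrightarrow> a g = a' g) \<Longrightarrow> group_algebra_rep G \<sigma> m a = group_algebra_rep G \<sigma> m a'"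
  unfolding group_algebra_rep_def by (auto intro: mat_sum_cong)

lemma group_algebra_rep_zero: "rep G m \<sigma> \<Longrightarrow> group_algebra_rep G \<sigma> m (\<lambda>_. 0) = 0\<^sub>m m m"
  by (rule eq_matI) (simp_all add: index_group_algebra_rep)

context group
begin

lemma group_algebra_rep_mult:
  assumes \<sigma>: "rep G m \<sigma>"
  shows "group_algebra_rep G \<sigma> m a * group_algebra_rep G \<sigma> m b
    = group_algebra_rep G \<sigma> m (\<lambda>k. \<Sum>g\<in>carrier G. a g * b (inv g \<otimes> k))"
proof (rule eq_matI)
  fix x y assume "x < dim_row (group_algebra_rep G \<sigma> m (\<lambda>k. \<Sum>g\<in>carrier G. a g * b (inv g \<otimes> k)))"
    and "y < dim_col (group_algebra_rep G \<sigma> m (\<lambda>k. \<Sum>g\<in>carrier G. a g * b (inv g \<otimes> k)))"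
  then have x: "x < m" and y: "y < m"
    by auto
  note \<sigma>c = rep_carrier[OF \<sigma>]
  have "(group_algebra_rep G \<sigma> m a * group_algebra_rep G \<sigma> m b) $$ (x,y)
      = (\<Sum>z<m. (\<Sum>g\<in>carrier G. a g * \<sigma> g $$ (x,z)) * (\<Sum>h\<in>carrier G. b h * \<sigma> h $$ (z,y)))"
    using x y by (subst index_mult_mat_sum[of _ m m _ m]) (simp_all add: index_group_algebra_rep[OF \<sigma>])
  also have "\<dots> = (\<Sum>z<m. \<Sum>g\<in>carrier G. \<Sum>h\<in>carrier G.
      a g * b h * (\<sigma> g $$ (x,z) * \<sigma> h $$ (z,y)))"
    by (simp add: sum_product mult_ac)
  also have "\<dots> = (\<Sum>g\<in>carrier G. \<Sum>h\<in>carrier G. \<Sum>z<m.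
      a g * b h * (\<sigma> g $$ (x,z) * \<sigma> h $$ (z,y)))"
    by (subst sum.swap, rule sum.cong[OF refl], rule sum.swap)
  also have "\<dots> = (\<Sum>g\<in>carrier G. \<Sum>h\<in>carrier G. a g * b h * \<sigma> (g \<otimes> h) $$ (x,y))"
    using x y \<sigma>c
    by (intro sum.cong refl) (simp add: rep_mult[OF \<sigma>] index_mult_mat_sum[of _ m m _ m] sum_distrib_left)
  also have "\<dots> = (\<Sum>g\<in>carrier G. \<Sum>k\<in>carrier G. a g * b (inv g \<otimes> k) * \<sigma> k $$ (x,y))"
  proof (rule sum.cong[OF refl])
    fix g assume g: "g \<in> carrier G"
    show "(\<Sum>h\<in>carrier G. a g * b h * \<sigma> (g \<otimes> h) $$ (x,y))
        = (\<Sum>k\<in>carrier G. a g * b (inv g \<otimes> k) * \<sigma> k $$ (x,y))"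
      using sum.reindex_bij_betw[OF bij_betw_mult_left[of "inv g"],
          of "\<lambda>h. a g * b h * \<sigma> (g \<otimes> h) $$ (x,y)"] g
      by (simp add: m_assoc[symmetric])
  qed
  also have "\<dots> = (\<Sum>k\<in>carrier G. (\<Sum>g\<in>carrier G. a g * b (inv g \<otimes> k)) * \<sigma> k $$ (x,y))"
    by (subst sum.swap) (simp add: sum_distrib_right)
  finally show "(group_algebra_rep G \<sigma> m a * group_algebra_rep G \<sigma> m b) $$ (x,y)
      = group_algebra_rep G \<sigma> m (\<lambda>k. \<Sum>g\<in>carrier G. a g * b (inv g \<otimes> k)) $$ (x,y)"
    using x y by (simp add: index_group_algebra_rep[OF \<sigma>])
qed (simp_all)

end

definition central_idempotent :: "('a, 'b) monoid_scheme \<Rightarrow> ('a \<Rightarrow> complex) \<Rightarrow> 'a \<Rightarrow> complex" where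
  "central_idempotent G \<chi> g = of_real (char_dim G \<chi>) / of_nat (card (carrier G)) * \<chi> (inv\<^bsub>G\<^esub> g)"

definition isotypic_proj ::
    "('a, 'b) monoid_scheme \<Rightarrow> ('a \<Rightarrow> complex mat) \<Rightarrow> nat \<Rightarrow> ('a \<Rightarrow> complex) \<Rightarrow> complex mat" where
  "isotypic_proj G \<sigma> m \<chi> = group_algebra_rep G \<sigma> m (central_idempotent G \<chi>)"

lemma isotypic_proj_carrier [simp]: "isotypic_proj G \<sigma> m \<chi> \<in> carrier_mat m m"
  and dim_isotypic_proj [simp]:
    "dim_row (isotypic_proj G \<sigma> m \<chi>) = m" "dim_col (isotypic_proj G \<sigma> m \<chi>) = m"
  unfolding isotypic_proj_def by simp_all

context finite_group
begin

lemma central_idempotent_convolution: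
  assumes \<chi>: "\<chi> \<in> irr_chars G" and \<chi>': "\<chi>' \<in> irr_chars G" and k: "k \<in> carrier G"
  shows "(\<Sum>g\<in>carrier G. central_idempotent G \<chi> g * central_idempotent G \<chi>' (inv g \<otimes> k)) =
    (if \<chi> = \<chi>' then central_idempotent G \<chi> k else 0)"
proof -
  obtain b \<tau> where irr: "irrep G b \<tau>" and \<chi>_eq: "\<chi> = character G \<tau>"
    using \<chi> by (rule irr_charsE)
  obtain b' \<tau>' where irr': "irrep G b' \<tau>'" and \<chi>'_eq: "\<chi>' = character G \<tau>'"
    using \<chi>' by (rule irr_charsE)
  let ?n = "of_nat (card (carrier G)) :: complex"
  define c where "c = of_real (char_dim G \<chi>) / ?n"
  define c' where "c' = of_real (char_dim G \<chi>') / ?n"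
  have c: "c = of_nat b / ?n"
    unfolding c_def \<chi>_eq using char_dim_character[OF irrepD(1)[OF irr]] by simp
  have "(\<Sum>g\<in>carrier G. central_idempotent G \<chi> g * central_idempotent G \<chi>' (inv g \<otimes> k))
      = c * c' * (\<Sum>g\<in>carrier G. \<chi> (inv g) * \<chi>' (inv k \<otimes> g))"
    using k by (simp add: central_idempotent_def c_def c'_def sum_distrib_left sum_divide_distrib
        mult_ac inv_mult_group)
  also have "\<dots> = (if \<chi> = \<chi>' then c * \<chi> (inv k) else 0)"
  proof (cases "\<chi> = \<chi>'")
    case True
    then have "c' = c"
      unfolding c_def c'_def by simp
    have "c * c * (?n / of_nat b) = c"
      using c card_carrier_pos irrepD(2)[OF irr] by simp
    moreover have "(\<Sum>g\<in>carrier G. \<chi> (inv g) * \<chi>' (inv k \<otimes> g)) = ?n / of_nat b * \<chi> (inv k)"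
      using character_convolution[OF irr irr' k] True \<chi>_eq \<chi>'_eq by simp
    ultimately show ?thesis
      using True \<open>c' = c\<close> by (simp only: mult.assoc[symmetric] if_P)
  qed (use character_convolution[OF irr irr' k] \<chi>_eq \<chi>'_eq in simp)
  also have "\<dots> = (if \<chi> = \<chi>' then central_idempotent G \<chi> k else 0)"
    by (simp add: central_idempotent_def c_def)
  finally show ?thesis .
qed

lemma isotypic_proj_mult:
  assumes \<sigma>: "rep G m \<sigma>" and \<chi>: "\<chi> \<in> irr_chars G" and \<chi>': "\<chi>' \<in> irr_chars G"
  shows "isotypic_proj G \<sigma> m \<chi> * isotypic_proj G \<sigma> m \<chi>' =
    (if \<chi> = \<chi>' then isotypic_proj G \<sigma> m \<chi> else 0\<^sub>m m m)"
proof -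
  have "isotypic_proj G \<sigma> m \<chi> * isotypic_proj G \<sigma> m \<chi>' =
      group_algebra_rep G \<sigma> m (\<lambda>k. if \<chi> = \<chi>' then central_idempotent G \<chi> k else 0)"
    unfolding isotypic_proj_def group_algebra_rep_mult[OF \<sigma>]
    by (intro group_algebra_rep_cong) (simp add: central_idempotent_convolution[OF \<chi> \<chi>'])
  then show ?thesis
    unfolding isotypic_proj_def by (simp add: group_algebra_rep_zero[OF \<sigma>])
qed

lemma isotypic_proj_sum_idempotent:
  assumes \<sigma>: "rep G m \<sigma>" and S: "S \<subseteq> irr_chars G" and fin: "finite S"
  defines "E \<equiv> mat_sum m m (isotypic_proj G \<sigma> m) S"
  shows "E * E = E"
proof -
  have "E * isotypic_proj G \<sigma> m \<chi>' = isotypic_proj G \<sigma> m \<chi>'" if \<chi>': "\<chi>' \<in> S" for \<chi>'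
  proof -
    have "isotypic_proj G \<sigma> m \<chi> * isotypic_proj G \<sigma> m \<chi>' =
        (if \<chi> = \<chi>' then isotypic_proj G \<sigma> m \<chi> else 0\<^sub>m m m)" if "\<chi> \<in> S" for \<chi>
      using isotypic_proj_mult[OF \<sigma>] S \<chi>' that by blast
    then have "E * isotypic_proj G \<sigma> m \<chi>' =
        mat_sum m m (\<lambda>\<chi>. if \<chi> = \<chi>' then isotypic_proj G \<sigma> m \<chi> else 0\<^sub>m m m) S"
      unfolding E_def by (subst mat_sum_mult[of _ m m]) (auto intro!: mat_sum_cong)
    also have "\<dots> = isotypic_proj G \<sigma> m \<chi>'"
    proof (rule eq_matI)
      fix i j assume "i < dim_row (isotypic_proj G \<sigma> m \<chi>')" "j < dim_col (isotypic_proj G \<sigma> m \<chi>')"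
      then show "mat_sum m m (\<lambda>\<chi>. if \<chi> = \<chi>' then isotypic_proj G \<sigma> m \<chi> else 0\<^sub>m m m) S $$ (i,j)
          = isotypic_proj G \<sigma> m \<chi>' $$ (i,j)"
        using fin \<chi>' by (simp add: if_distrib[of "\<lambda>A. A $$ (i,j)"] sum.delta cong: if_cong)
    qed simp_all
    finally show ?thesis .
  qed
  then show ?thesis
    unfolding E_def by (subst mult_mat_sum[of _ m m]) (auto intro: mat_sum_cong)
qed

lemma mat_trace_isotypic_proj:
  assumes \<sigma>: "rep G m \<sigma>" and \<chi>: "\<chi> \<in> irr_chars G"
  shows "mat_trace (isotypic_proj G \<sigma> m \<chi>) =
    of_real (char_dim G \<chi>) * cnj (class_inner G \<chi> (character G \<sigma>))"
proof -
  obtain d \<rho> where irr: "irrep G d \<rho>" and \<chi>_eq: "\<chi> = character G \<rho>"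
    using \<chi> by (rule irr_charsE)
  let ?c = "of_real (char_dim G \<chi>) / of_nat (card (carrier G)) :: complex"
  have "mat_trace (isotypic_proj G \<sigma> m \<chi>) = (\<Sum>g\<in>carrier G. mat_trace ((?c * \<chi> (inv g)) \<cdot>\<^sub>m \<sigma> g))"
    unfolding isotypic_proj_def group_algebra_rep_def central_idempotent_def
    by (rule mat_trace_mat_sum) (use rep_carrier[OF \<sigma>] in auto)
  also have "\<dots> = (\<Sum>g\<in>carrier G. ?c * (cnj (\<chi> g) * character G \<sigma> g))"
    using \<chi>_eq character_inv[OF irrepD(1)[OF irr]]
    by (intro sum.cong refl) (simp add: mat_trace_smult[OF rep_carrier[OF \<sigma>]] character_eq_mat_trace)
  also have "\<dots> = of_real (char_dim G \<chi>) * cnj (class_inner G \<chi> (character G \<sigma>))"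
    unfolding class_inner_def by (simp add: sum_distrib_left sum_divide_distrib)
  finally show ?thesis .
qed

lemma char_dim_mult_class_inner_nonneg:
  assumes \<sigma>: "rep G m \<sigma>" and \<chi>: "\<chi> \<in> irr_chars G"
  shows "0 \<le> char_dim G \<chi> * Re (class_inner G \<chi> (character G \<sigma>))"
proof -
  have "isotypic_proj G \<sigma> m \<chi> * isotypic_proj G \<sigma> m \<chi> = isotypic_proj G \<sigma> m \<chi>"
    using isotypic_proj_mult[OF \<sigma> \<chi> \<chi>] by simp
  then obtain k where k: "mat_trace (isotypic_proj G \<sigma> m \<chi>) = of_nat k"
    using mat_trace_idempotent[OF isotypic_proj_carrier] by blast
  have "char_dim G \<chi> * Re (class_inner G \<chi> (character G \<sigma>)) = Re (mat_trace (isotypic_proj G \<sigma> m \<chi>))"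
    using mat_trace_isotypic_proj[OF \<sigma> \<chi>] by simp
  then show ?thesis
    using k by simp
qed

lemma sum_char_dim_mult_class_inner_le:
  assumes \<sigma>: "rep G m \<sigma>" and S: "S \<subseteq> irr_chars G" and fin: "finite S"
  shows "(\<Sum>\<chi>\<in>S. char_dim G \<chi> * Re (class_inner G \<chi> (character G \<sigma>))) \<le> real m"
proof -
  obtain k where "k \<le> m" and k: "mat_trace (mat_sum m m (isotypic_proj G \<sigma> m) S) = of_nat k"
    using mat_trace_idempotent[OF mat_sum_carrier isotypic_proj_sum_idempotent[OF \<sigma> S fin]] .
  have "(\<Sum>\<chi>\<in>S. char_dim G \<chi> * Re (class_inner G \<chi> (character G \<sigma>)))
      = Re (\<Sum>\<chi>\<in>S. mat_trace (isotypic_proj G \<sigma> m \<chi>))"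
    using S by (simp add: Re_sum mat_trace_isotypic_proj[OF \<sigma>] subsetD)
  also have "\<dots> = real k"
    using k by (simp add: mat_trace_mat_sum)
  finally show ?thesis
    using \<open>k \<le> m\<close> by simp
qed

end

section \<open>The collision bound\<close>

lemma sum_sq_mult_le_of_sum_pow4_le:
  fixes x y :: "'i \<Rightarrow> real"
  assumes x: "(\<Sum>i\<in>A. x i ^ 4) \<le> f" and y: "(\<Sum>i\<in>A. y i ^ 4) \<le> f"
  shows "(\<Sum>i\<in>A. (x i * y i)\<^sup>2) \<le> f"
proof -
  have "0 \<le> (\<Sum>i\<in>A. x i ^ 4)"
    by (intro sum_nonneg) simp
  with x have f: "0 \<le> f"
    by linarith
  have "(\<Sum>i\<in>A. (x i * y i)\<^sup>2) = (\<Sum>i\<in>A. \<bar>(x i)\<^sup>2\<bar> * \<bar>(y i)\<^sup>2\<bar>)"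
    by (simp add: power_mult_distrib)
  also have "\<dots> \<le> L2_set (\<lambda>i. (x i)\<^sup>2) A * L2_set (\<lambda>i. (y i)\<^sup>2) A"
    by (rule L2_set_mult_ineq)
  also have "\<dots> \<le> sqrt f * sqrt f"
    unfolding L2_set_def using x y f
    by (intro mult_mono) (simp_all add: power_mult[symmetric] sum_nonneg)
  also have "\<dots> = f"
    using f by simp
  finally show ?thesis .
qed

lemma sum_mult_le_of_abs_le:
  fixes a b :: "'i \<Rightarrow> real"
  assumes "\<And>i. i \<in> S \<Longrightarrow> \<bar>a i\<bar> \<le> B" and "\<And>i. i \<in> S \<Longrightarrow> 0 \<le> b i"
    and "sum b S \<le> 1" and "0 \<le> B"
  shows "(\<Sum>i\<in>S. a i * b i) \<le> B"
proof -
  have "(\<Sum>i\<in>S. a i * b i) \<le> (\<Sum>i\<in>S. B * b i)"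
    using assms(1,2) by (intro sum_mono mult_right_mono) (auto simp: abs_le_iff)
  also have "\<dots> = B * sum b S"
    by (simp add: sum_distrib_left)
  also have "\<dots> \<le> B"
    using assms(3,4) by (simp add: mult_left_le)
  finally show ?thesis .
qed

context finite_group
begin

lemma irrep_dim_le_card:
  assumes irr: "irrep G d \<rho>"
  shows "d \<le> card (carrier G)"
proof -
  have "(cmod (character G \<rho> \<one>))\<^sup>2 \<le> (\<Sum>g\<in>carrier G. (cmod (character G \<rho> g))\<^sup>2)"
    by (rule member_le_sum) (use finite_carrier in auto)
  then have "real (d\<^sup>2) \<le> real (card (carrier G))"
    using sum_cmod_character_sq[OF irr] character_one[OF irrepD(1)[OF irr]] by simp
  then have "d\<^sup>2 \<le> card (carrier G)"
    by linarith
  moreover have "d \<le> d\<^sup>2"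
    by (simp add: power2_eq_square)
  ultimately show ?thesis
    by simp
qed

lemma irrep_dim_le_max_irrep_dim:
  assumes "irrep G d \<rho>"
  shows "real d \<le> max_irrep_dim G"
proof -
  have "{real d | d. \<exists>\<rho>. irrep G d \<rho>} \<subseteq> real ` {..card (carrier G)}"
    using irrep_dim_le_card by auto
  then have "finite {real d | d. \<exists>\<rho>. irrep G d \<rho>}"
    by (rule finite_subset) simp
  then show ?thesis
    unfolding max_irrep_dim_def using assms by (intro Max_ge) auto
qed

lemma P_tensor_eq_class_inner_tensor_rep:
  assumes "rep G a \<rho>" and "rep G b \<rho>'"
  shows "P_tensor G (character G \<rho>) (character G \<rho>') \<chi> =
    char_dim G \<chi> * Re (class_inner G \<chi> (character G (tensor_rep a b \<rho> \<rho>'))) / real (a * b)"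
  using assms by (simp add: P_tensor_def character_tensor_rep char_dim_character)

lemma P_tensor_nonneg:
  assumes "irrep G a \<rho>" and "irrep G b \<rho>'" and "\<chi> \<in> irr_chars G"
  shows "0 \<le> P_tensor G (character G \<rho>) (character G \<rho>') \<chi>"
  using char_dim_mult_class_inner_nonneg[OF rep_tensor_rep[OF irrepD(1)[OF assms(1)]
      irrepD(1)[OF assms(2)]] assms(3)]
  by (simp add: P_tensor_eq_class_inner_tensor_rep[OF irrepD(1)[OF assms(1)] irrepD(1)[OF assms(2)]])

lemma sum_P_tensor_le_1:
  assumes irr: "irrep G a \<rho>" and irr': "irrep G b \<rho>'"
  shows "(\<Sum>\<chi>\<in>irr_chars G. P_tensor G (character G \<rho>) (character G \<rho>') \<chi>) \<le> 1"
proof (cases "finite (irr_chars G)")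
  \<comment> \<open>irr_chars G is in fact finite, but an infinite sum is 0 anyway\<close>
  case True
  note \<rho> = irrepD(1)[OF irr] and \<rho>' = irrepD(1)[OF irr']
  have "(\<Sum>\<chi>\<in>irr_chars G. P_tensor G (character G \<rho>) (character G \<rho>') \<chi>) =
      (\<Sum>\<chi>\<in>irr_chars G. char_dim G \<chi> *
        Re (class_inner G \<chi> (character G (tensor_rep a b \<rho> \<rho>')))) / real (a * b)"
    by (simp add: P_tensor_eq_class_inner_tensor_rep[OF \<rho> \<rho>'] sum_divide_distrib)
  also have "\<dots> \<le> real (a * b) / real (a * b)"
    using sum_char_dim_mult_class_inner_le[OF rep_tensor_rep[OF \<rho> \<rho>'] order_refl True]
    by (intro divide_right_mono) simp_all
  also have "\<dots> = 1"
    using irrepD(2)[OF irr] irrepD(2)[OF irr'] by simp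
  finally show ?thesis .
qed simp

lemma cmod_class_inner_character_mult_le:
  assumes irr: "irrep G d \<tau>"
    and u: "(\<Sum>g\<in>carrier G. cmod (u g) ^ 4) \<le> f" and v: "(\<Sum>g\<in>carrier G. cmod (v g) ^ 4) \<le> f"
  shows "cmod (class_inner G (character G \<tau>) (\<lambda>g. u g * v g)) \<le> sqrt f / sqrt (card (carrier G))"
proof -
  let ?n = "real (card (carrier G))"
  let ?\<chi> = "character G \<tau>"
  have "cmod (class_inner G ?\<chi> (\<lambda>g. u g * v g))
      = cmod (\<Sum>g\<in>carrier G. ?\<chi> g * cnj (u g * v g)) / ?n"
    by (simp add: class_inner_def norm_divide)
  also have "\<dots> \<le> (\<Sum>g\<in>carrier G. cmod (?\<chi> g * cnj (u g * v g))) / ?n"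
    by (intro divide_right_mono norm_sum) simp
  also have "\<dots> = (\<Sum>g\<in>carrier G. \<bar>cmod (?\<chi> g)\<bar> * \<bar>cmod (u g) * cmod (v g)\<bar>) / ?n"
    by (simp add: norm_mult)
  also have "\<dots> \<le> L2_set (\<lambda>g. cmod (?\<chi> g)) (carrier G) *
      L2_set (\<lambda>g. cmod (u g) * cmod (v g)) (carrier G) / ?n"
    by (intro divide_right_mono L2_set_mult_ineq) simp
  also have "\<dots> \<le> sqrt ?n * sqrt f / ?n"
    unfolding L2_set_def sum_cmod_character_sq[OF irr]
    using sum_sq_mult_le_of_sum_pow4_le[OF u v] by (intro divide_right_mono mult_left_mono) simp_all
  also have "\<dots> = sqrt f * (sqrt ?n / ?n)"
    by simp
  also have "\<dots> = sqrt f / sqrt ?n"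
    using sqrt_divide_self_eq[of ?n] by (simp add: divide_inverse)
  finally show ?thesis .
qed

lemma abs_P_tensor_le:
  assumes irr_l: "irrep G dl \<rho>l" and irr_m: "irrep G dm \<rho>m"
    and sm_l: "smooth G f dl \<rho>l" and sm_m: "smooth G f dm \<rho>m" and \<chi>: "\<chi> \<in> irr_chars G"
  shows "\<bar>P_tensor G (character G \<rho>l) (character G \<rho>m) \<chi>\<bar>
    \<le> max_irrep_dim G / sqrt (real (card (carrier G))) * sqrt f"
proof -
  obtain d \<tau> where irr: "irrep G d \<tau>" and \<chi>_eq: "\<chi> = character G \<tau>"
    using \<chi> by (rule irr_charsE)
  let ?u = "\<lambda>g. character G \<rho>l g / of_nat dl" and ?v = "\<lambda>g. character G \<rho>m g / of_nat dm"
  have "class_inner G \<chi> (\<lambda>g. character G \<rho>l g * character G \<rho>m g)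
      = of_nat (dl * dm) * class_inner G \<chi> (\<lambda>g. ?u g * ?v g)"
    using irrepD(2)[OF irr_l] irrepD(2)[OF irr_m]
    by (simp add: class_inner_def sum_distrib_left sum_divide_distrib mult_ac)
  then have "\<bar>P_tensor G (character G \<rho>l) (character G \<rho>m) \<chi>\<bar>
      = real d * \<bar>Re (class_inner G \<chi> (\<lambda>g. ?u g * ?v g))\<bar>"
    using irrepD(2)[OF irr_l] irrepD(2)[OF irr_m] \<chi>_eq char_dim_character[OF irrepD(1)[OF irr]]
      char_dim_character[OF irrepD(1)[OF irr_l]] char_dim_character[OF irrepD(1)[OF irr_m]]
    by (simp add: P_tensor_def abs_mult)
  also have "\<dots> \<le> real d * cmod (class_inner G \<chi> (\<lambda>g. ?u g * ?v g))"
    by (intro mult_left_mono abs_Re_le_cmod) simp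
  also have "\<dots> \<le> max_irrep_dim G * (sqrt f / sqrt (real (card (carrier G))))"
    using cmod_class_inner_character_mult_le[OF irr, of ?u f ?v] sm_l sm_m \<chi>_eq
      irrep_dim_le_max_irrep_dim[OF irr]
    unfolding smooth_def by (intro mult_mono) simp_all
  finally show ?thesis
    by simp
qed

end

theorem lemma1:
  fixes G :: "('a, 'b) monoid_scheme" and f :: real
    and dl dm dl' dm' :: nat and \<rho>l \<rho>m \<rho>l' \<rho>m' :: "'a \<Rightarrow> complex mat"
  assumes "group G" and "finite (carrier G)" and "f \<ge> 0"
    and "irrep G dl \<rho>l" and "irrep G dm \<rho>m" and "irrep G dl' \<rho>l'" and "irrep G dm' \<rho>m'"
    and "smooth G f dl \<rho>l" and "smooth G f dm \<rho>m"
  shows "P_coll G (character G \<rho>l) (character G \<rho>m) (character G \<rho>l') (character G \<rho>m')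
           \<le> max_irrep_dim G / sqrt (real (card (carrier G))) * sqrt f"
proof -
  interpret finite_group G
    using assms(1,2) by (simp add: finite_group_def finite_group_axioms_def)
  have "0 \<le> max_irrep_dim G"
    using irrep_dim_le_max_irrep_dim[OF assms(4)] by linarith
  then show ?thesis
    unfolding P_coll_def using assms
    by (intro sum_mult_le_of_abs_le abs_P_tensor_le P_tensor_nonneg sum_P_tensor_le_1) simp_all
qed

end
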